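(* Let $r>1$ be real and let $a,b\in\mathbb{S}$ be such that the open interval $(\sigma_{-r}(a),\sigma_{-r}(b))$ is a gap of $\sigma_{-r}(\mathbb{S})$. Then: (i) for every prime $p\ge P_r$, $v_p(a)=\infty$ and $v_p(b)=0$; (ii) for every prime $p<P_r$ with $v_p(a)<\infty$, $v_p(a)<\frac{\log P_r}{\log p}-1$; (iii) for every prime $p<P_r$, $v_p(b)<\frac{\log P_r}{\log p}$.
   Context: $p_m$ is the $m$-th prime. A Steinitz number is a formal product $n=\prod_p p^{\alpha_p}$ over all primes with $\alpha_p\in\mathbb{Z}_{\ge0}\cup\{\infty\}$, $v_p(n)=\alpha_p$; $\mathbb{S}$ is the set of Steinitz numbers. $\sigma_{-r}$ is defined on $\mathbb{S}$ multiplicatively by $\sigma_{-r}(p^\alpha)=\sum_{i=0}^\alpha p^{-ri}$ for finite $\alpha$ and $\sigma_{-r}(p^\infty)=\frac1{1-p^{-r}}$. A gap of $\sigma_{-r}(\mathbb{S})$ is a bounded connected component of $\mathbb{R}\setminus\sigma_{-r}(\mathbb{S})$. Let $u_m(r)=\prod_{t=m+1}^\infty\frac1{1-p_t^{-r}}$; $p_m$ is $r$-mighty if $1+p_m^{-r}>u_m(r)$. $L_r$ is the index of the largest $r$-mighty prime ($L_r=0$ if none; it is finite), and $P_r=p_{L_r+1}$. *)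

theory Defs
  imports "HOL-Analysis.Analysis" "HOL-Computational_Algebra.Primes" "HOL-Library.Extended_Nat"
begin

(* Steinitz numbers: a Steinitz number n is represented by its exponent function
   p \<mapsto> v_p(n) \<in> \<nat> \<union> {\<infinity>}; only values at primes are meaningful. *)
type_synonym steinitz = "nat \<Rightarrow> enat"

(* p_m, the m-th prime, 1-indexed: p_1 = 2 *)
definition nthp :: "nat \<Rightarrow> nat" where
  "nthp m = enumerate {p::nat. prime p} (m - 1)"

definition sigma_loc :: "real \<Rightarrow> nat \<Rightarrow> enat \<Rightarrow> real" where
  "sigma_loc r p \<alpha> = (case \<alpha> of
      enat k \<Rightarrow> (\<Sum>i\<le>k. real p powr (- r * real i))
    | \<infinity> \<Rightarrow> 1 / (1 - real p powr (- r)))"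

definition sigma_S :: "real \<Rightarrow> steinitz \<Rightarrow> real" where
  "sigma_S r a = (\<Prod>n. if prime n then sigma_loc r n (a n) else 1)"

definition is_gap :: "real \<Rightarrow> real set \<Rightarrow> bool" where
  "is_gap r G \<longleftrightarrow> G \<in> components (- range (sigma_S r)) \<and> bounded G"

definition u_tail :: "nat \<Rightarrow> real \<Rightarrow> real" where
  "u_tail m r = (\<Prod>t. 1 / (1 - real (nthp (m + 1 + t)) powr (- r)))"

definition mighty :: "real \<Rightarrow> nat \<Rightarrow> bool" where
  "mighty r m \<longleftrightarrow> 1 + real (nthp m) powr (- r) > u_tail m r"

definition L_idx :: "real \<Rightarrow> nat" where
  "L_idx r = (if \<exists>m\<ge>1. mighty r m then GREATEST m. m \<ge> 1 \<and> mighty r m else 0)"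

definition P_r :: "real \<Rightarrow> nat" where
  "P_r r = nthp (L_idx r + 1)"

end

(*
  Taking logarithms, ln sigma_{-r}(c) is the sum over primes p of l_p(c_p) = ln sigma_{-r}(p^(c_p)),
  where l_p increases from l_p(0) = 0 to l_p(infinity) = -ln(1 - p^-r) in steps of at most ln(1 + p^-r).
  For p >= P_r, p is not mighty, i.e. ln(1 + p^-r) is at most the sum of l_q(infinity) over the primes
  q > p.  A greedy choice of exponents then lets the part of the sum coming from the primes
  >= P_r take every value in [0, T], T being its value at c = infinity (a Kakeya-type argument).
  So for every c the whole interval [H(c), H(c) + T] consists of values of ln sigma_{-r}, where
  H(c) is the part coming from the primes < P_r, and a gap must avoid all these intervals.
  For c = a this forces all exponents of a at primes >= P_r to be infinite, for c = b all
  exponents of b there to vanish; and changing one exponent of a or b below P_r by a step of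
  size at most l_{P_r}(infinity) <= T would move such an interval into the gap, which bounds these
  exponents.  That there are only finitely many mighty primes, so that P_r is meaningful,
  follows from Chebyshev's estimates: the interval (x, 16x] contains arbitrarily many primes.
*)
theory Submission
  imports Defs "HOL-Number_Theory.Number_Theory" "HOL-Real_Asymp.Real_Asymp"
begin

section \<open>Greedy representation of reals as sums of series\<close>

lemma suminf_tail_tendsto_zero:
  fixes w :: "nat \<Rightarrow> 'a::real_normed_vector"
  assumes "summable w"
  shows "(\<lambda>n. \<Sum>m. w (m + n)) \<longlonglongrightarrow> 0"
  using tendsto_diff[OF tendsto_const summable_LIMSEQ[OF assms], of "suminf w"]
  by (simp add: suminf_minus_initial_segment[OF assms])

lemma greedy_partial_sums:
  fixes g :: "nat \<Rightarrow> 'a \<Rightarrow> real" and w :: "nat \<Rightarrow> real"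
  assumes w: "summable w"
    and step: "\<And>n t. 0 \<le> t \<Longrightarrow> t \<le> w n + (\<Sum>m. w (m + Suc n)) \<Longrightarrow>
                 \<exists>\<alpha>. g n \<alpha> \<le> t \<and> t \<le> g n \<alpha> + (\<Sum>m. w (m + Suc n))"
    and y: "0 \<le> y" "y \<le> suminf w"
  shows "\<exists>c. \<forall>n. (\<Sum>m<n. g m (c m)) \<le> y \<and> y \<le> (\<Sum>m<n. g m (c m)) + (\<Sum>m. w (m + n))"
proof -
  define tail where "tail n = (\<Sum>m. w (m + n))" for n
  have tail_eq: "tail n = suminf w - (\<Sum>m<n. w m)" for n
    unfolding tail_def by (rule suminf_minus_initial_segment[OF w])
  then have tail_Suc: "tail n = w n + tail (Suc n)" for n
    by simp
  define pick where "pick n t = (SOME \<alpha>. g n \<alpha> \<le> t \<and> t \<le> g n \<alpha> + tail (Suc n))" for n t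
  have pick: "g n (pick n t) \<le> t \<and> t \<le> g n (pick n t) + tail (Suc n)"
    if "0 \<le> t" "t \<le> w n + tail (Suc n)" for n t
  proof -
    have "\<exists>\<alpha>. g n \<alpha> \<le> t \<and> t \<le> g n \<alpha> + tail (Suc n)"
      using step[OF that[unfolded tail_def]] by (simp add: tail_def)
    then show ?thesis
      unfolding pick_def by (rule someI_ex)
  qed
  obtain s where s_0: "s 0 = 0" and s_rec: "\<And>n. s (Suc n) = s n + g n (pick n (y - s n))"
    by (rule that[of "rec_nat 0 (\<lambda>n s. s + g n (pick n (y - s)))"]) simp_all
  define c where "c n = pick n (y - s n)" for n
  have s_Suc: "s (Suc n) = s n + g n (c n)" for n
    by (simp add: s_rec c_def)
  have partial_sums: "(\<Sum>m<n. g m (c m)) = s n" for n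
    by (induction n) (simp_all add: s_0 s_Suc)
  have "s n \<le> y \<and> y \<le> s n + tail n" for n
  proof (induction n)
    case 0
    then show ?case using y by (simp add: s_0 tail_def)
  next
    case (Suc n)
    then have "0 \<le> y - s n" "y - s n \<le> w n + tail (Suc n)"
      using tail_Suc[of n] by linarith+
    then show ?case
      using pick[of "y - s n" n] by (simp add: s_Suc c_def)
  qed
  then have "\<forall>n. (\<Sum>m<n. g m (c m)) \<le> y \<and> y \<le> (\<Sum>m<n. g m (c m)) + (\<Sum>m. w (m + n))"
    by (simp add: partial_sums tail_def)
  then show ?thesis by blast
qed

lemma greedy_sums_representation:
  fixes g :: "nat \<Rightarrow> 'a \<Rightarrow> real" and w :: "nat \<Rightarrow> real"
  assumes w: "summable w"
    and step: "\<And>n t. 0 \<le> t \<Longrightarrow> t \<le> w n + (\<Sum>m. w (m + Suc n)) \<Longrightarrow>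
                 \<exists>\<alpha>. g n \<alpha> \<le> t \<and> t \<le> g n \<alpha> + (\<Sum>m. w (m + Suc n))"
    and y: "0 \<le> y" "y \<le> suminf w"
  shows "\<exists>c. (\<lambda>n. g n (c n)) sums y"
proof -
  obtain c where c: "\<And>n. (\<Sum>m<n. g m (c m)) \<le> y \<and> y \<le> (\<Sum>m<n. g m (c m)) + (\<Sum>m. w (m + n))"
    using greedy_partial_sums[OF w step y] by blast
  have "(\<lambda>n. \<Sum>m<n. g m (c m)) \<longlonglongrightarrow> y"
  proof (rule tendsto_sandwich[OF _ _ _ tendsto_const])
    show "\<forall>\<^sub>F n in sequentially. y - (\<Sum>m. w (m + n)) \<le> (\<Sum>m<n. g m (c m))"
      "\<forall>\<^sub>F n in sequentially. (\<Sum>m<n. g m (c m)) \<le> y"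
      using c by (simp_all add: always_eventually algebra_simps)
    show "(\<lambda>n. y - (\<Sum>m. w (m + n))) \<longlonglongrightarrow> y"
      using tendsto_diff[OF tendsto_const suminf_tail_tendsto_zero[OF w], of y] by simp
  qed
  then show ?thesis
    unfolding sums_def by blast
qed

section \<open>Chebyshev bounds and primes in the interval (x, 16x]\<close>

definition primes_psi :: "nat \<Rightarrow> real" where
  "primes_psi n = (\<Sum>d\<le>n. mangoldt d)"

lemma ln_fact_eq_sum_mangoldt: "ln (fact n :: real) = (\<Sum>d\<le>n. mangoldt d * real (n div d))"
proof (induction n)
  case 0
  then show ?case by simp
next
  case (Suc n)
  have "(\<Sum>d\<le>Suc n. if d dvd Suc n then mangoldt d else 0) = sum mangoldt {d\<in>{..Suc n}. d dvd Suc n}"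
    by (simp only: sum.inter_filter[OF finite_atMost])
  also have "{d\<in>{..Suc n}. d dvd Suc n} = {d. d dvd Suc n}"
    by (auto dest: dvd_imp_le)
  also have "sum mangoldt {d. d dvd Suc n} = ln (real (Suc n))"
    using mangoldt_sum[of "Suc n", where 'a=real] by simp
  finally have dvd_sum: "(\<Sum>d\<le>Suc n. if d dvd Suc n then mangoldt d else 0) = ln (real (Suc n))" .
  have div_Suc: "real (Suc n div d) = real (n div d) + (if d dvd Suc n \<and> d > 0 then 1 else 0)" for d
    by (cases "d = 0") (auto simp: div_Suc dvd_eq_mod_eq_0)
  have "(\<Sum>d\<le>Suc n. mangoldt d * real (Suc n div d))
      = (\<Sum>d\<le>Suc n. mangoldt d * real (n div d)) + (\<Sum>d\<le>Suc n. if d dvd Suc n then mangoldt d else 0)"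
    by (subst sum.distrib[symmetric], rule sum.cong)
       (auto simp: div_Suc algebra_simps simp del: of_nat_Suc)
  moreover have "ln (fact (Suc n) :: real) = ln (real (Suc n)) + ln (fact n)"
    by (simp add: ln_mult del: of_nat_Suc)
  ultimately show ?case
    using Suc dvd_sum by simp
qed

lemma double_div_bounds:
  fixes n d :: nat
  shows "2 * (n div d) \<le> (2 * n) div d \<and> (2 * n) div d \<le> 2 * (n div d) + 1"
proof (cases "d = 0")
  case False
  define q where "q = n div d"
  define s where "s = n mod d"
  have "n = d * q + s" unfolding q_def s_def by simp
  then have "2 * n = d * (2 * q) + 2 * s" by (simp add: algebra_simps)
  then have "(2 * n) div d = 2 * q + 2 * s div d" using False by simp
  moreover have "2 * s div d \<le> 1"
    using False less_mult_imp_div_less[of "2 * s" 2 d] by (simp add: s_def mult.commute)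
  ultimately show ?thesis unfolding q_def s_def by simp
qed simp

lemma ln_central_binomial_eq_sum_mangoldt:
  "ln (real ((2 * n) choose n))
     = (\<Sum>d\<le>2 * n. mangoldt d * (real ((2 * n) div d) - 2 * real (n div d)))"
proof -
  have nat_eq: "fact n * fact n * ((2 * n) choose n) = (fact (2 * n) :: nat)"
    using binomial_fact_lemma[of n "2 * n"] by simp
  have "(fact (2 * n) :: real) = of_nat (fact (2 * n))" by simp
  also have "\<dots> = of_nat (fact n * fact n * ((2 * n) choose n))" by (simp only: nat_eq)
  also have "\<dots> = real ((2 * n) choose n) * fact n * fact n" by simp
  finally have "(fact (2 * n) :: real) = real ((2 * n) choose n) * fact n * fact n" .
  then have "ln (fact (2 * n) :: real) = ln (real ((2 * n) choose n)) + 2 * ln (fact n)"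
    by (simp add: ln_mult)
  moreover have "(\<Sum>d\<le>n. mangoldt d * real (n div d)) = (\<Sum>d\<le>2 * n. mangoldt d * real (n div d))"
    by (rule sum.mono_neutral_left) auto
  ultimately have "ln (real ((2 * n) choose n))
      = (\<Sum>d\<le>2 * n. mangoldt d * real ((2 * n) div d)) - 2 * (\<Sum>d\<le>2 * n. mangoldt d * real (n div d))"
    by (simp add: ln_fact_eq_sum_mangoldt)
  also have "\<dots> = (\<Sum>d\<le>2 * n. mangoldt d * (real ((2 * n) div d) - 2 * real (n div d)))"
    by (simp add: sum_subtractf sum_distrib_left algebra_simps)
  finally show ?thesis .
qed

lemma ln_central_binomial_le_primes_psi: "ln (real ((2 * n) choose n)) \<le> primes_psi (2 * n)"
  unfolding ln_central_binomial_eq_sum_mangoldt primes_psi_def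
proof (rule sum_mono)
  fix d
  have "real ((2 * n) div d) - 2 * real (n div d) \<le> 1"
    using double_div_bounds[of n d] by linarith
  then show "mangoldt d * (real ((2 * n) div d) - 2 * real (n div d)) \<le> mangoldt d"
    using mangoldt_nonneg[of d] by (metis mult_left_le)
qed

lemma primes_psi_double_minus_le: "primes_psi (2 * n) - primes_psi n \<le> ln (real ((2 * n) choose n))"
proof -
  have "primes_psi (2 * n) = primes_psi n + (\<Sum>d\<in>{n<..2 * n}. mangoldt d)"
    unfolding primes_psi_def by (subst sum.union_disjoint[symmetric]) (auto intro!: sum.cong)
  then have "primes_psi (2 * n) - primes_psi n = (\<Sum>d\<in>{n<..2 * n}. mangoldt d)"
    by simp
  also have "\<dots> = (\<Sum>d\<le>2 * n. if n < d then mangoldt d else 0)"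
    by (simp add: sum.inter_filter[symmetric]) (intro sum.cong, auto)
  also have "\<dots> \<le> (\<Sum>d\<le>2 * n. mangoldt d * (real ((2 * n) div d) - 2 * real (n div d)))"
  proof (rule sum_mono)
    fix d assume d: "d \<in> {..2 * n}"
    show "(if n < d then mangoldt d else 0) \<le> mangoldt d * (real ((2 * n) div d) - 2 * real (n div d))"
    proof (cases "n < d")
      case True
      then have "n div d = 0" and "(2 * n) div d = 1"
        using d by (simp_all add: div_nat_eqI)
      then show ?thesis using True by simp
    next
      case False
      have "0 \<le> real ((2 * n) div d) - 2 * real (n div d)"
        using double_div_bounds[of n d] by linarith
      then show ?thesis using False mangoldt_nonneg[of d] by simp
    qed
  qed
  finally show ?thesis
    by (simp add: ln_central_binomial_eq_sum_mangoldt)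
qed

lemma ln_central_binomial_le: "ln (real ((2 * n) choose n)) \<le> real n * ln 4"
proof -
  have "real ((2 * n) choose n) \<le> 2 ^ (2 * n)"
    using binomial_le_pow2[of "2 * n" n] by (metis of_nat_le_iff of_nat_numeral of_nat_power)
  moreover have "0 < real ((2 * n) choose n)" by simp
  ultimately have "ln (real ((2 * n) choose n)) \<le> ln (4 ^ n)"
    by (simp add: power_mult)
  then show ?thesis
    by (simp add: ln_realpow)
qed

lemma ln_central_binomial_ge:
  assumes "n > 0"
  shows "real n * ln 4 - ln (2 * real n) \<le> ln (real ((2 * n) choose n))"
proof -
  have "ln (4 ^ n / (2 * real n)) \<le> ln (real ((2 * n) choose n))"
    using central_binomial_lower_bound[OF assms] assms by simp
  then show ?thesis
    using assms by (simp add: ln_div ln_realpow)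
qed

lemma primes_psi_power_of_two_le: "primes_psi (2 ^ k) \<le> 2 ^ k * ln 4"
proof (induction k)
  case 0
  then show ?case by (simp add: primes_psi_def)
next
  case (Suc k)
  then show ?case
    using primes_psi_double_minus_le[of "2 ^ k"] ln_central_binomial_le[of "2 ^ k"] by simp
qed

lemma primes_psi_diff_le_card_primepow:
  assumes "A \<le> B"
  shows "primes_psi B - primes_psi A \<le> real (card {d\<in>{A<..B}. primepow d}) * ln (real B)"
proof -
  have "primes_psi B = primes_psi A + (\<Sum>d\<in>{A<..B}. mangoldt d)"
    unfolding primes_psi_def using assms by (subst sum.union_disjoint[symmetric]) (auto intro!: sum.cong)
  then have "primes_psi B - primes_psi A = (\<Sum>d\<in>{A<..B}. mangoldt d)"
    by simp
  also have "\<dots> = (\<Sum>d\<in>{d\<in>{A<..B}. primepow d}. mangoldt d)"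
    by (rule sum.mono_neutral_right) (auto simp: mangoldt_def)
  also have "\<dots> \<le> (\<Sum>d\<in>{d\<in>{A<..B}. primepow d}. ln (real B))"
    by (rule sum_mono) (auto intro: order.trans[OF mangoldt_le])
  finally show ?thesis by simp
qed

lemma card_proper_prime_powers_le:
  assumes "B \<ge> 1"
  shows "real (card {d. d \<le> B \<and> primepow d \<and> \<not> prime d}) \<le> (sqrt (real B) + 1) * (log 2 (real B) + 1)"
proof -
  define s where "s = nat \<lfloor>sqrt (real B)\<rfloor>"
  define t where "t = nat \<lfloor>log 2 (real B)\<rfloor>"
  have "{d. d \<le> B \<and> primepow d \<and> \<not> prime d} \<subseteq> (\<lambda>(p, k). p ^ k) ` ({..s} \<times> {..t})"
  proof
    fix d assume "d \<in> {d. d \<le> B \<and> primepow d \<and> \<not> prime d}"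
    then obtain p k where p: "prime p" and "k > 0" and d: "d = p ^ k" "p ^ k \<le> B" and "\<not> prime d"
      by (auto simp: primepow_def)
    then have k: "k \<ge> 2"
      by (cases "k = 1") auto
    have p2: "p \<ge> 2" using p prime_ge_2_nat by blast
    have "p ^ 2 \<le> p ^ k" using k p2 by (simp add: power_increasing)
    then have "p ^ 2 \<le> B" using d by simp
    then have "real p \<le> sqrt (real B)"
      by (simp add: real_le_rsqrt flip: of_nat_le_iff)
    then have "p \<le> s" unfolding s_def by (simp add: le_nat_floor)
    have "2 ^ k \<le> p ^ k" using p2 by (simp add: power_mono)
    then have "2 ^ k \<le> B" using d by simp
    then have "real k \<le> log 2 (real B)"
      using assms by (simp add: le_log_iff powr_realpow flip: of_nat_le_iff)
    then have "k \<le> t" unfolding t_def by (simp add: le_nat_floor)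
    show "d \<in> (\<lambda>(p, k). p ^ k) ` ({..s} \<times> {..t})"
      using \<open>p \<le> s\<close> \<open>k \<le> t\<close> d by auto
  qed
  then have "card {d. d \<le> B \<and> primepow d \<and> \<not> prime d} \<le> card ((\<lambda>(p, k). p ^ k) ` ({..s} \<times> {..t}))"
    by (rule card_mono[rotated]) auto
  also have "\<dots> \<le> card ({..s} \<times> {..t})"
    by (rule card_image_le) auto
  finally have "card {d. d \<le> B \<and> primepow d \<and> \<not> prime d} \<le> card ({..s} \<times> {..t})" .
  also have "card ({..s} \<times> {..t}) = (s + 1) * (t + 1)"
    by (simp add: card_cartesian_product)
  finally have "real (card {d. d \<le> B \<and> primepow d \<and> \<not> prime d}) \<le> real ((s + 1) * (t + 1))"
    by (simp only: of_nat_le_iff)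
  then have "real (card {d. d \<le> B \<and> primepow d \<and> \<not> prime d}) \<le> (real s + 1) * (real t + 1)"
    by (simp add: algebra_simps)
  also have "\<dots> \<le> (sqrt (real B) + 1) * (log 2 (real B) + 1)"
  proof (rule mult_mono)
    show "real s + 1 \<le> sqrt (real B) + 1" unfolding s_def by simp
    show "real t + 1 \<le> log 2 (real B) + 1" unfolding t_def using assms by simp
  qed simp_all
  finally show ?thesis .
qed

lemma primes_psi_double_ge:
  assumes "n > 0"
  shows "real n * ln 4 - ln (2 * real n) \<le> primes_psi (2 * n)"
  using ln_central_binomial_ge[OF assms] ln_central_binomial_le_primes_psi[of n] by linarith

lemma card_primepow_between_le:
  assumes "B \<ge> 1"
  shows "real (card {d\<in>{A<..B}. primepow d})
           \<le> real (card {q. prime q \<and> A < q \<and> q \<le> B}) + (sqrt (real B) + 1) * (log 2 (real B) + 1)"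
proof -
  have "card {d\<in>{A<..B}. primepow d}
      \<le> card ({q. prime q \<and> A < q \<and> q \<le> B} \<union> {d. d \<le> B \<and> primepow d \<and> \<not> prime d})"
    by (rule card_mono) auto
  also have "\<dots> \<le> card {q. prime q \<and> A < q \<and> q \<le> B} + card {d. d \<le> B \<and> primepow d \<and> \<not> prime d}"
    by (rule card_Un_le)
  finally have "real (card {d\<in>{A<..B}. primepow d})
      \<le> real (card {q. prime q \<and> A < q \<and> q \<le> B}) + real (card {d. d \<le> B \<and> primepow d \<and> \<not> prime d})"
    by (simp only: of_nat_add[symmetric] of_nat_le_iff)
  then show ?thesis
    using card_proper_prime_powers_le[OF assms] by linarith
qed

lemma card_primes_dyadic_ge:
  fixes k :: nat
  defines "y \<equiv> (2::real) ^ k"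
  shows "(6 * y * ln 4 - ln (16 * y) - (sqrt (16 * y) + 1) * (log 2 (16 * y) + 1) * ln (16 * y)) / ln (16 * y)
           \<le> real (card {q. prime q \<and> 2 ^ (k + 1) < q \<and> q \<le> (2::nat) ^ (k + 4)})"
proof -
  define A :: nat where "A = 2 ^ (k + 1)"
  define B :: nat where "B = 2 ^ (k + 4)"
  define primes where "primes = {q. prime q \<and> A < q \<and> q \<le> B}"
  have B: "real B = 16 * y" unfolding B_def y_def by (simp add: power_add)
  have "A \<le> B" "B \<ge> 1" unfolding A_def B_def by (simp_all add: power_add)
  have "y \<ge> 1" unfolding y_def by simp
  then have lnB: "ln (16 * y) > 0" by simp
  have "real (card {d\<in>{A<..B}. primepow d})
      \<le> real (card primes) + (sqrt (16 * y) + 1) * (log 2 (16 * y) + 1)"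
    using card_primepow_between_le[OF \<open>B \<ge> 1\<close>, of A] B by (simp add: primes_def)
  then have "real (card {d\<in>{A<..B}. primepow d}) * ln (16 * y)
      \<le> (real (card primes) + (sqrt (16 * y) + 1) * (log 2 (16 * y) + 1)) * ln (16 * y)"
    using lnB by (intro mult_right_mono) auto
  moreover have "primes_psi B - primes_psi A \<le> real (card {d\<in>{A<..B}. primepow d}) * ln (16 * y)"
    using primes_psi_diff_le_card_primepow[OF \<open>A \<le> B\<close>] B by simp
  moreover have "B = 2 * 2 ^ (k + 3)" unfolding B_def by (simp add: power_add)
  then have "real (2 ^ (k + 3)) * ln 4 - ln (2 * real (2 ^ (k + 3))) \<le> primes_psi B"
    by (simp only:) (rule primes_psi_double_ge, simp)
  moreover have "real (2 ^ (k + 3)) * ln 4 - ln (2 * real (2 ^ (k + 3))) = 8 * y * ln 4 - ln (16 * y)"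
    by (simp add: y_def power_add)
  moreover have "primes_psi A \<le> 2 * y * ln 4"
    using primes_psi_power_of_two_le[of "k + 1"] by (simp add: A_def y_def)
  ultimately have "6 * y * ln 4 - ln (16 * y)
      \<le> (real (card primes) + (sqrt (16 * y) + 1) * (log 2 (16 * y) + 1)) * ln (16 * y)"
    by linarith
  then have "6 * y * ln 4 - ln (16 * y) - (sqrt (16 * y) + 1) * (log 2 (16 * y) + 1) * ln (16 * y)
      \<le> real (card primes) * ln (16 * y)"
    by (simp add: algebra_simps)
  then show ?thesis
    using lnB by (simp add: primes_def A_def B_def divide_le_eq)
qed

lemma many_primes_between_x_and_16x:
  "\<exists>x0. \<forall>x\<ge>x0. N \<le> card {q::nat. prime q \<and> x < q \<and> q \<le> 16 * x}"
proof -
  have "filterlim (\<lambda>y::real. (6 * y * ln 4 - ln (16 * y)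
      - (sqrt (16 * y) + 1) * (log 2 (16 * y) + 1) * ln (16 * y)) / ln (16 * y)) at_top at_top"
    by real_asymp
  then obtain Y where Y: "\<And>y. y \<ge> Y \<Longrightarrow> real N \<le> (6 * y * ln 4 - ln (16 * y)
      - (sqrt (16 * y) + 1) * (log 2 (16 * y) + 1) * ln (16 * y)) / ln (16 * y)"
    by (auto simp: filterlim_at_top eventually_at_top_linorder)
  obtain k0 where k0: "Y < 2 ^ k0" using real_arch_pow[of 2 Y] by auto
  have "N \<le> card {q. prime q \<and> x < q \<and> q \<le> 16 * x}" if "x \<ge> 2 ^ k0" for x :: nat
  proof -
    have "(1::nat) \<le> 2 ^ k0" by simp
    then have "1 \<le> x" using that by linarith
    then obtain k where k: "2 ^ k \<le> x" "x < 2 ^ (k + 1)"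
      using ex_power_ivl1[of 2 x] by auto
    have "(2::nat) ^ k0 < 2 ^ (k + 1)" using that k by linarith
    then have "k0 \<le> k"
      using power_less_imp_less_exp[of "2::nat" k0 "k + 1"] by simp
    then have "(2::real) ^ k0 \<le> 2 ^ k"
      by (simp add: power_increasing)
    then have "real N \<le> real (card {q. prime q \<and> 2 ^ (k + 1) < q \<and> q \<le> (2::nat) ^ (k + 4)})"
      using Y[of "2 ^ k"] k0 card_primes_dyadic_ge[of k] by linarith
    also have "\<dots> \<le> real (card {q. prime q \<and> x < q \<and> q \<le> 16 * x})"
    proof (intro of_nat_mono card_mono)
      have "(2::nat) ^ (k + 4) \<le> 16 * x" using k by (simp add: power_add)
      then show "{q. prime q \<and> 2 ^ (k + 1) < q \<and> q \<le> (2::nat) ^ (k + 4)} \<subseteq> {q. prime q \<and> x < q \<and> q \<le> 16 * x}"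
        using k by auto
    qed simp
    finally show ?thesis by simp
  qed
  then show ?thesis by blast
qed

section \<open>The local factors of sigma_{-r}\<close>

definition log_sigma_loc :: "real \<Rightarrow> nat \<Rightarrow> enat \<Rightarrow> real" where
  "log_sigma_loc r p \<alpha> = ln (sigma_loc r p \<alpha>)"

lemma powr_minus_in_unit_interval:
  assumes "r > 0" "p \<ge> 2"
  shows "0 < real p powr - r" and "real p powr - r < 1"
  using assms by (simp_all add: powr_less_one)

lemma powr_minus_power:
  fixes x :: real
  assumes "x > 0"
  shows "(x powr - r) ^ n = (x ^ n) powr - r"
proof -
  have "(x ^ n) powr - r = (x powr real n) powr - r"
    using assms by (simp add: powr_realpow)
  also have "\<dots> = (x powr - r) ^ n"
    using assms by (simp add: powr_powr powr_power mult.commute)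
  finally show ?thesis ..
qed

lemma sigma_loc_enat_eq_geometric:
  assumes "p > 0"
  shows "sigma_loc r p (enat k) = (\<Sum>i\<le>k. (real p powr - r) ^ i)"
  using assms by (simp add: sigma_loc_def powr_power mult.commute)

lemma sigma_loc_enat_closed_form:
  assumes "r > 0" "p \<ge> 2"
  shows "sigma_loc r p (enat k) = (1 - (real p powr - r) ^ Suc k) / (1 - real p powr - r)"
  using powr_minus_in_unit_interval[OF assms] assms
  by (simp add: sigma_loc_enat_eq_geometric sum_gp0)

lemma sigma_loc_infinity: "sigma_loc r p \<infinity> = 1 / (1 - real p powr - r)"
  by (simp add: sigma_loc_def)

lemma sigma_loc_zero: "p > 0 \<Longrightarrow> sigma_loc r p 0 = 1"
  by (simp add: sigma_loc_def zero_enat_def)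

lemma strict_mono_sigma_loc:
  assumes "r > 0" "p \<ge> 2"
  shows "strict_mono (sigma_loc r p)"
proof (rule strict_monoI)
  fix \<alpha> \<beta> :: enat
  assume "\<alpha> < \<beta>"
  then obtain k where k: "\<alpha> = enat k"
    by (cases \<alpha>) auto
  define x where "x = real p powr - r"
  have x: "0 < x" "x < 1"
    using powr_minus_in_unit_interval[OF assms] by (simp_all add: x_def)
  show "sigma_loc r p \<alpha> < sigma_loc r p \<beta>"
  proof (cases \<beta>)
    case (enat m)
    with \<open>\<alpha> < \<beta>\<close> k have "x ^ Suc m < x ^ Suc k"
      using x by (intro power_strict_decreasing) auto
    then show ?thesis
      using x k enat by (simp add: sigma_loc_enat_closed_form[OF assms] divide_strict_right_mono flip: x_def)
  next
    case infinity
    have "0 < x ^ Suc k" using x by simp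
    then show ?thesis
      using x k infinity by (simp add: sigma_loc_enat_closed_form[OF assms] sigma_loc_infinity divide_strict_right_mono flip: x_def)
  qed
qed

lemma sigma_loc_ge_one:
  assumes "r > 0" "p \<ge> 2"
  shows "1 \<le> sigma_loc r p \<alpha>"
  using strict_mono_less_eq[OF strict_mono_sigma_loc[OF assms], of 0 \<alpha>] assms
  by (simp add: sigma_loc_zero)

lemma strict_mono_log_sigma_loc:
  assumes "r > 0" "p \<ge> 2"
  shows "strict_mono (log_sigma_loc r p)"
proof (rule strict_monoI)
  fix \<alpha> \<beta> :: enat
  assume "\<alpha> < \<beta>"
  then have "sigma_loc r p \<alpha> < sigma_loc r p \<beta>"
    using strict_monoD[OF strict_mono_sigma_loc[OF assms]] by blast
  moreover have "0 < sigma_loc r p \<alpha>"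
    using sigma_loc_ge_one[OF assms, of \<alpha>] by linarith
  ultimately show "log_sigma_loc r p \<alpha> < log_sigma_loc r p \<beta>"
    by (simp add: log_sigma_loc_def)
qed

lemma log_sigma_loc_zero: "p > 0 \<Longrightarrow> log_sigma_loc r p 0 = 0"
  by (simp add: log_sigma_loc_def sigma_loc_zero)

lemma log_sigma_loc_nonneg:
  assumes "r > 0" "p \<ge> 2"
  shows "0 \<le> log_sigma_loc r p \<alpha>"
  using sigma_loc_ge_one[OF assms] by (simp add: log_sigma_loc_def)

lemma log_sigma_loc_le_infinity:
  assumes "r > 0" "p \<ge> 2"
  shows "log_sigma_loc r p \<alpha> \<le> log_sigma_loc r p \<infinity>"
  using strict_mono_less_eq[OF strict_mono_log_sigma_loc[OF assms]] by simp

lemma log_sigma_loc_infinity: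
  assumes "r > 0" "p \<ge> 2"
  shows "log_sigma_loc r p \<infinity> = - ln (1 - real p powr - r)"
  using powr_minus_in_unit_interval[OF assms]
  by (simp add: log_sigma_loc_def sigma_loc_infinity ln_div)

lemma log_sigma_loc_infinity_minus_enat:
  assumes "r > 0" "p \<ge> 2"
  shows "log_sigma_loc r p \<infinity> - log_sigma_loc r p (enat k) = - ln (1 - (real p powr - r) ^ Suc k)"
proof -
  define x where "x = real p powr - r"
  have x: "0 < x" "x < 1"
    using powr_minus_in_unit_interval[OF assms] by (simp_all add: x_def)
  moreover have "x ^ Suc k < 1"
    using power_Suc_less_one[OF x] .
  ultimately show ?thesis
    by (simp add: log_sigma_loc_def sigma_loc_infinity sigma_loc_enat_closed_form[OF assms] ln_div flip: x_def)
qed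

lemma log_sigma_loc_Suc_minus_le:
  assumes "r > 0" "p \<ge> 2"
  shows "log_sigma_loc r p (enat (Suc k)) - log_sigma_loc r p (enat k) \<le> ln (1 + (real p powr - r) ^ Suc k)"
proof -
  define s where "s = sigma_loc r p (enat k)"
  define y where "y = (real p powr - r) ^ Suc k"
  have s: "1 \<le> s" using sigma_loc_ge_one[OF assms] by (simp add: s_def)
  have y: "0 < y" using powr_minus_in_unit_interval[OF assms] by (simp add: y_def)
  have "sigma_loc r p (enat (Suc k)) = s + y"
    using assms by (simp add: s_def y_def sigma_loc_enat_eq_geometric)
  then have "log_sigma_loc r p (enat (Suc k)) - log_sigma_loc r p (enat k) = ln ((s + y) / s)"
    using s y by (simp add: log_sigma_loc_def s_def ln_div)
  also have "(s + y) / s = 1 + y / s"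
    using s by (simp add: field_simps)
  also have "ln (1 + y / s) \<le> ln (1 + y)"
  proof -
    have "y / s \<le> y" using divide_left_mono[of 1 s y] s y by simp
    moreover have "0 < y / s" using s y by simp
    ultimately show ?thesis by simp
  qed
  finally show ?thesis by (simp add: y_def)
qed

lemma log_sigma_loc_enat_tendsto:
  assumes "r > 0" "p \<ge> 2"
  shows "(\<lambda>k. log_sigma_loc r p (enat k)) \<longlonglongrightarrow> log_sigma_loc r p \<infinity>"
proof -
  define x where "x = real p powr - r"
  have x: "0 < x" "x < 1"
    using powr_minus_in_unit_interval[OF assms] by (simp_all add: x_def)
  have "(\<lambda>k. x ^ Suc k) \<longlonglongrightarrow> 0"
    using LIMSEQ_Suc[OF LIMSEQ_power_zero[of x]] x by simp
  then have "(\<lambda>k. ln ((1 - x ^ Suc k) / (1 - x))) \<longlonglongrightarrow> ln ((1 - 0) / (1 - x))"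
    using x by (intro tendsto_intros) auto
  then show ?thesis
    by (simp add: log_sigma_loc_def sigma_loc_infinity sigma_loc_enat_closed_form[OF assms] flip: x_def)
qed

lemma log_sigma_loc_minus_le_infinity:
  assumes "r > 0" "p \<ge> 2" "P \<ge> 2" "P \<le> p ^ Suc k"
  shows "log_sigma_loc r p \<beta> - log_sigma_loc r p (enat k) \<le> log_sigma_loc r P \<infinity>"
proof -
  have "(real p powr - r) ^ Suc k = real (p ^ Suc k) powr - r"
    using assms by (simp only: powr_minus_power of_nat_power)
  also have "\<dots> \<le> real P powr - r"
  proof (rule powr_mono2')
    show "real P \<le> real (p ^ Suc k)" using assms(4) by (simp only: of_nat_le_iff)
  qed (use assms in auto)
  finally have "ln (1 - real P powr - r) \<le> ln (1 - (real p powr - r) ^ Suc k)"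
    using powr_minus_in_unit_interval[OF \<open>r > 0\<close> \<open>P \<ge> 2\<close>] by simp
  then have "log_sigma_loc r p \<infinity> - log_sigma_loc r p (enat k) \<le> log_sigma_loc r P \<infinity>"
    using log_sigma_loc_infinity_minus_enat[OF assms(1,2), of k] log_sigma_loc_infinity[OF assms(1,3)]
    by linarith
  then show ?thesis
    using log_sigma_loc_le_infinity[OF assms(1,2), of \<beta>] by linarith
qed

lemma log_sigma_loc_approx:
  assumes "r > 0" "p \<ge> 2" "ln (1 + real p powr - r) \<le> \<delta>"
    and "0 \<le> t" "t \<le> log_sigma_loc r p \<infinity> + \<delta>"
  shows "\<exists>\<alpha>. log_sigma_loc r p \<alpha> \<le> t \<and> t \<le> log_sigma_loc r p \<alpha> + \<delta>"
proof (cases "log_sigma_loc r p \<infinity> \<le> t")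
  case True
  then show ?thesis using assms(5) by blast
next
  case False
  then have "\<forall>\<^sub>F k in sequentially. t < log_sigma_loc r p (enat k)"
    by (intro order_tendstoD(1)[OF log_sigma_loc_enat_tendsto[OF assms(1,2)]]) simp
  then have "\<exists>k. t < log_sigma_loc r p (enat k)"
    unfolding eventually_sequentially by blast
  then obtain k where k: "t < log_sigma_loc r p (enat k)"
    and least: "\<forall>j<k. \<not> t < log_sigma_loc r p (enat j)"
    using exists_least_iff[of "\<lambda>k. t < log_sigma_loc r p (enat k)"] by blast
  have "log_sigma_loc r p (enat 0) = 0"
    using log_sigma_loc_zero[of p r] assms(2) by (simp add: zero_enat_def)
  have "k \<noteq> 0"
  proof
    assume "k = 0"
    with k \<open>log_sigma_loc r p (enat 0) = 0\<close> assms(4) show False by simp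
  qed
  then obtain j where j: "k = Suc j"
    using not0_implies_Suc by blast
  have "(real p powr - r) ^ Suc j \<le> real p powr - r"
    using powr_minus_in_unit_interval[OF assms(1,2)] by (simp add: power_le_one mult_left_le)
  then have "ln (1 + (real p powr - r) ^ Suc j) \<le> ln (1 + real p powr - r)"
    using powr_minus_in_unit_interval[OF assms(1,2)] by (simp add: add_pos_nonneg)
  then have "t \<le> log_sigma_loc r p (enat j) + \<delta>"
    using k[unfolded j] log_sigma_loc_Suc_minus_le[OF assms(1,2), of j] assms(3) by linarith
  moreover have "log_sigma_loc r p (enat j) \<le> t"
    using least j by (simp add: not_less)
  ultimately show ?thesis by blast
qed

lemma powr_le_log_sigma_loc_infinity:
  assumes "r > 0" "p \<ge> 2"
  shows "real p powr - r \<le> log_sigma_loc r p \<infinity>"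
  using ln_le_minus_one[of "1 - real p powr - r"] powr_minus_in_unit_interval[OF assms]
  by (simp add: log_sigma_loc_infinity[OF assms])

lemma log_sigma_loc_infinity_le:
  assumes "r \<ge> 1" "p \<ge> 2"
  shows "log_sigma_loc r p \<infinity> \<le> 2 * real p powr - r"
proof -
  define x where "x = real p powr - r"
  have "x \<le> 2 powr - r"
    unfolding x_def using assms by (intro powr_mono2') auto
  also have "(2::real) powr - r \<le> 2 powr - 1"
    using assms by (intro powr_mono) auto
  finally have x: "0 < x" "x \<le> 1 / 2"
    using powr_minus_in_unit_interval[of r p] assms by (simp_all add: x_def powr_minus_divide)
  have "log_sigma_loc r p \<infinity> = ln (1 / (1 - x))"
    using x assms by (simp add: log_sigma_loc_infinity x_def ln_div)
  also have "\<dots> \<le> 1 / (1 - x) - 1"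
    using x by (intro ln_le_minus_one) simp
  also have "\<dots> \<le> 2 * x"
    using x by (simp add: field_simps)
  finally show ?thesis by (simp add: x_def)
qed

section \<open>ln sigma_{-r} as a sum over primes\<close>

definition log_sigma_on :: "real \<Rightarrow> nat set \<Rightarrow> steinitz \<Rightarrow> real" where
  "log_sigma_on r A c = (\<Sum>p. if prime p \<and> p \<in> A then log_sigma_loc r p (c p) else 0)"

lemma summable_log_sigma_on:
  assumes "r > 1"
  shows "summable (\<lambda>p. if prime p \<and> p \<in> A then log_sigma_loc r p (c p) else 0)"
proof (rule summable_comparison_test)
  show "summable (\<lambda>p. 2 * real p powr - r)"
    using assms by (intro summable_mult) (simp add: summable_real_powr_iff)
  have "norm (if prime p \<and> p \<in> A then log_sigma_loc r p (c p) else 0) \<le> 2 * real p powr - r" for p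
  proof (cases "prime p \<and> p \<in> A")
    case True
    then have "p \<ge> 2" using prime_ge_2_nat by blast
    then have "0 \<le> log_sigma_loc r p (c p)" "log_sigma_loc r p (c p) \<le> log_sigma_loc r p \<infinity>"
      "log_sigma_loc r p \<infinity> \<le> 2 * real p powr - r"
      using assms log_sigma_loc_nonneg log_sigma_loc_le_infinity log_sigma_loc_infinity_le by simp_all
    then show ?thesis using True by simp
  qed auto
  then show "\<exists>N. \<forall>n\<ge>N. norm (if prime n \<and> n \<in> A then log_sigma_loc r n (c n) else 0) \<le> 2 * real n powr - r"
    by blast
qed

lemma sigma_S_eq_exp_log_sigma_on:
  assumes "r > 1"
  shows "sigma_S r c = exp (log_sigma_on r UNIV c)"
proof -
  have "(\<lambda>p. if prime p then sigma_loc r p (c p) else 1)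
      = (\<lambda>p. exp (if prime p \<and> p \<in> UNIV then log_sigma_loc r p (c p) else 0))"
  proof
    fix p
    show "(if prime p then sigma_loc r p (c p) else 1)
        = exp (if prime p \<and> p \<in> UNIV then log_sigma_loc r p (c p) else 0)"
    proof (cases "prime p")
      case True
      then have "0 < sigma_loc r p (c p)"
        using assms sigma_loc_ge_one[of r p "c p"] prime_ge_2_nat[of p] by simp
      then show ?thesis using True by (simp add: log_sigma_loc_def)
    qed simp
  qed
  then show ?thesis
    unfolding sigma_S_def log_sigma_on_def using prodinf_exp[OF summable_log_sigma_on[OF assms, of UNIV c]] by simp
qed

lemma log_sigma_on_Un:
  assumes "r > 1" "A \<inter> B = {}"
  shows "log_sigma_on r (A \<union> B) c = log_sigma_on r A c + log_sigma_on r B c"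
  unfolding log_sigma_on_def suminf_add[OF summable_log_sigma_on[OF assms(1)] summable_log_sigma_on[OF assms(1)]]
  using assms(2) by (intro arg_cong[where f = suminf] ext) auto

lemma log_sigma_on_cong:
  "(\<And>p. prime p \<Longrightarrow> p \<in> A \<Longrightarrow> c p = d p) \<Longrightarrow> log_sigma_on r A c = log_sigma_on r A d"
  unfolding log_sigma_on_def by (intro arg_cong[where f = suminf] ext) auto

lemma log_sigma_on_singleton:
  assumes "prime p"
  shows "log_sigma_on r {p} c = log_sigma_loc r p (c p)"
proof -
  have "(\<lambda>q. if prime q \<and> q \<in> {p} then log_sigma_loc r q (c q) else 0)
      = (\<lambda>q. if q = p then log_sigma_loc r q (c q) else 0)"
    using assms by auto
  then have "(\<lambda>q. if prime q \<and> q \<in> {p} then log_sigma_loc r q (c q) else 0) sums log_sigma_loc r p (c p)"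
    using sums_single[of p "\<lambda>q. log_sigma_loc r q (c q)"] by simp
  then show ?thesis
    unfolding log_sigma_on_def by (rule sums_unique[symmetric])
qed

lemma log_sigma_on_update:
  assumes "r > 1" "prime p" "p \<in> A"
  shows "log_sigma_on r A (c(p := \<alpha>)) = log_sigma_on r A c - log_sigma_loc r p (c p) + log_sigma_loc r p \<alpha>"
proof -
  have "log_sigma_on r A d = log_sigma_on r (A - {p}) d + log_sigma_loc r p (d p)" for d
  proof -
    have "log_sigma_on r A d = log_sigma_on r ((A - {p}) \<union> {p}) d"
      using assms(3) by (simp add: insert_absorb)
    also have "\<dots> = log_sigma_on r (A - {p}) d + log_sigma_on r {p} d"
      by (rule log_sigma_on_Un[OF assms(1)]) auto
    also have "log_sigma_on r {p} d = log_sigma_loc r p (d p)"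
      by (rule log_sigma_on_singleton[OF assms(2)])
    finally show ?thesis .
  qed
  moreover have "log_sigma_on r (A - {p}) (c(p := \<alpha>)) = log_sigma_on r (A - {p}) c"
    by (rule log_sigma_on_cong) auto
  ultimately show ?thesis by simp
qed

lemma log_sigma_on_nonneg:
  assumes "r > 1"
  shows "0 \<le> log_sigma_on r A c"
  unfolding log_sigma_on_def using assms
  by (intro suminf_nonneg[OF summable_log_sigma_on]) (auto intro: log_sigma_loc_nonneg prime_ge_2_nat)

lemma log_sigma_on_le_infinity:
  assumes "r > 1"
  shows "log_sigma_on r A c \<le> log_sigma_on r A (\<lambda>_. \<infinity>)"
  unfolding log_sigma_on_def using assms
  by (intro suminf_le summable_log_sigma_on) (auto intro: log_sigma_loc_le_infinity prime_ge_2_nat)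

lemma log_sigma_on_less_infinity:
  assumes "r > 1" "prime q" "q \<in> A" "c q \<noteq> \<infinity>"
  shows "log_sigma_on r A c < log_sigma_on r A (\<lambda>_. \<infinity>)"
proof -
  let ?f = "\<lambda>d p. if prime p \<and> p \<in> A then log_sigma_loc r p (d p) else 0"
  have q2: "q \<ge> 2" using assms(2) prime_ge_2_nat by blast
  have "0 < (\<Sum>p. ?f (\<lambda>_. \<infinity>) p - ?f c p)"
  proof (rule suminf_pos2)
    show "summable (\<lambda>p. ?f (\<lambda>_. \<infinity>) p - ?f c p)"
      using assms(1) by (intro summable_diff summable_log_sigma_on)
    show "0 \<le> ?f (\<lambda>_. \<infinity>) p - ?f c p" for p
      using assms(1) by (auto intro: log_sigma_loc_le_infinity prime_ge_2_nat)
    have "c q < \<infinity>" using assms(4) by (cases "c q") auto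
    then show "0 < ?f (\<lambda>_. \<infinity>) q - ?f c q"
      using assms strict_monoD[OF strict_mono_log_sigma_loc[OF _ q2], of r "c q" \<infinity>] by simp
  qed
  then show ?thesis
    unfolding log_sigma_on_def
    using suminf_diff[OF summable_log_sigma_on[OF assms(1), of A "\<lambda>_. \<infinity>"] summable_log_sigma_on[OF assms(1), of A c]]
    by linarith
qed

lemma log_sigma_on_pos:
  assumes "r > 1" "prime q" "q \<in> A" "c q \<noteq> 0"
  shows "0 < log_sigma_on r A c"
  unfolding log_sigma_on_def
proof (rule suminf_pos2[OF summable_log_sigma_on[OF assms(1)]])
  have q2: "q \<ge> 2" using assms(2) prime_ge_2_nat by blast
  show "0 \<le> (if prime p \<and> p \<in> A then log_sigma_loc r p (c p) else 0)" for p
    using assms(1) by (auto intro: log_sigma_loc_nonneg prime_ge_2_nat)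
  have "0 < c q" using assms(4) not_gr_zero by blast
  then have "log_sigma_loc r q 0 < log_sigma_loc r q (c q)"
    using assms(1) strict_monoD[OF strict_mono_log_sigma_loc[OF _ q2], of r 0 "c q"] by simp
  then show "0 < (if prime q \<and> q \<in> A then log_sigma_loc r q (c q) else 0)"
    using assms q2 by (simp add: log_sigma_loc_zero)
qed

lemma sum_le_log_sigma_on:
  assumes "r > 1" "finite Q" "\<And>q. q \<in> Q \<Longrightarrow> prime q \<and> q \<in> A"
  shows "(\<Sum>q\<in>Q. log_sigma_loc r q (c q)) \<le> log_sigma_on r A c"
proof -
  have "(\<Sum>q\<in>Q. log_sigma_loc r q (c q)) = (\<Sum>q\<in>Q. if prime q \<and> q \<in> A then log_sigma_loc r q (c q) else 0)"
    using assms(3) by (intro sum.cong) auto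
  also have "\<dots> \<le> log_sigma_on r A c"
    unfolding log_sigma_on_def using assms(1,2)
    by (intro sum_le_suminf summable_log_sigma_on) (auto intro: log_sigma_loc_nonneg prime_ge_2_nat)
  finally show ?thesis .
qed

lemma log_sigma_on_Int_atLeast:
  assumes "r > 1"
  shows "log_sigma_on r (A \<inter> {k..}) c
    = (\<Sum>m. if prime (m + k) \<and> m + k \<in> A then log_sigma_loc r (m + k) (c (m + k)) else 0)"
  using suminf_split_initial_segment[OF summable_log_sigma_on[OF assms, of "A \<inter> {k..}" c], of k]
  by (simp add: log_sigma_on_def)

lemma log_sigma_on_atLeast_onto:
  assumes r: "r > 1"
    and dense: "\<And>q. prime q \<Longrightarrow> P \<le> q \<Longrightarrow> ln (1 + real q powr - r) \<le> log_sigma_on r {q<..} (\<lambda>_. \<infinity>)"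
    and y: "0 \<le> y" "y \<le> log_sigma_on r {P..} (\<lambda>_. \<infinity>)"
  shows "\<exists>c. log_sigma_on r {P..} c = y"
proof -
  define g where "g n \<alpha> = (if prime n \<and> n \<in> {P..} then log_sigma_loc r n \<alpha> else 0)" for n \<alpha>
  have tail: "(\<Sum>m. g (m + Suc n) \<infinity>) = log_sigma_on r {n<..} (\<lambda>_. \<infinity>)" if "P \<le> n" for n
  proof -
    have "{n<..} = {P..} \<inter> {Suc n..}" using that by auto
    then have "log_sigma_on r {n<..} (\<lambda>_. \<infinity>) = log_sigma_on r ({P..} \<inter> {Suc n..}) (\<lambda>_. \<infinity>)"
      by simp
    also have "\<dots> = (\<Sum>m. g (m + Suc n) \<infinity>)"
      unfolding log_sigma_on_Int_atLeast[OF r] g_def ..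
    finally show ?thesis ..
  qed
  have "\<exists>c. (\<lambda>n. g n (c n)) sums y"
  proof (rule greedy_sums_representation)
    show "summable (\<lambda>n. g n \<infinity>)"
      using summable_log_sigma_on[OF r, of "{P..}" "\<lambda>_. \<infinity>"] by (simp add: g_def)
    show "0 \<le> y" "y \<le> (\<Sum>n. g n \<infinity>)"
      using y by (simp_all add: g_def log_sigma_on_def)
    fix n t
    assume t: "0 \<le> t" "t \<le> g n \<infinity> + (\<Sum>m. g (m + Suc n) \<infinity>)"
    show "\<exists>\<alpha>. g n \<alpha> \<le> t \<and> t \<le> g n \<alpha> + (\<Sum>m. g (m + Suc n) \<infinity>)"
    proof (cases "prime n \<and> P \<le> n")
      case True
      then show ?thesis
        using log_sigma_loc_approx[of r n "\<Sum>m. g (m + Suc n) \<infinity>" t] t r dense[of n] tail[of n]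
        by (simp add: g_def prime_ge_2_nat)
    next
      case False
      then have "g n = (\<lambda>_. 0)" by (auto simp: g_def)
      then show ?thesis using t by simp
    qed
  qed
  then show ?thesis
    unfolding log_sigma_on_def g_def by (auto dest: sums_unique)
qed

section \<open>Mighty primes\<close>

lemma prime_nthp: "prime (nthp m)"
  using enumerate_in_set[OF primes_infinite] by (simp add: nthp_def)

lemma nthp_less_nthp_iff:
  assumes "m \<ge> 1" "n \<ge> 1"
  shows "nthp m < nthp n \<longleftrightarrow> m < n"
proof -
  have "m - 1 < n - 1 \<longleftrightarrow> m < n" using assms by arith
  then show ?thesis using primes_infinite by (simp add: nthp_def)
qed

lemma nthp_le_nthp_iff:
  assumes "m \<ge> 1" "n \<ge> 1"
  shows "nthp m \<le> nthp n \<longleftrightarrow> m \<le> n"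
proof -
  have "m - 1 \<le> n - 1 \<longleftrightarrow> m \<le> n" using assms by arith
  then show ?thesis using primes_infinite by (simp add: nthp_def)
qed

lemma ex_nthp_eq:
  assumes "prime q"
  shows "\<exists>m\<ge>1. nthp m = q"
proof -
  obtain i where "enumerate {p. prime p} i = q"
    using enumerate_Ex[OF primes_infinite, of q] assms by auto
  then have "nthp (Suc i) = q" by (simp add: nthp_def)
  then show ?thesis by (intro exI[of _ "Suc i"]) simp
qed

lemma nthp_ge: "m - 1 \<le> nthp m"
  using le_enumerate[OF primes_infinite] by (simp add: nthp_def)

lemma sums_nthp_reindex:
  assumes m: "m \<ge> 1" and f: "\<And>p. \<not> (prime p \<and> nthp m < p) \<Longrightarrow> f p = 0"
  shows "(\<lambda>t. f (nthp (m + 1 + t))) sums L \<longleftrightarrow> f sums L"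
proof -
  define g where "g t = nthp (m + 1 + t)" for t
  have "strict_mono g"
    unfolding strict_mono_def g_def using m by (simp add: nthp_less_nthp_iff)
  moreover have "f p = 0" if "p \<notin> range g" for p
  proof (rule ccontr)
    assume "f p \<noteq> 0"
    then have p: "prime p" "nthp m < p" using f by blast+
    obtain k where k: "k \<ge> 1" "nthp k = p"
      using ex_nthp_eq[OF p(1)] by blast
    then have "m < k"
      using p(2) nthp_less_nthp_iff[OF m k(1)] by simp
    then have "g (k - m - 1) = p" using k(2) by (simp add: g_def)
    then show False using that rangeI[of g "k - m - 1"] by simp
  qed
  ultimately show ?thesis
    using sums_mono_reindex[of g f L] by (simp add: g_def)
qed

lemma u_tail_eq_exp_log_sigma_on:
  assumes r: "r > 1" and m: "m \<ge> 1"
  shows "u_tail m r = exp (log_sigma_on r {nthp m<..} (\<lambda>_. \<infinity>))"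
proof -
  define L where "L = log_sigma_on r {nthp m<..} (\<lambda>_. \<infinity>)"
  define x where "x t = real (nthp (m + 1 + t)) powr - r" for t
  have above: "prime (nthp (m + 1 + t)) \<and> nthp m < nthp (m + 1 + t)" for t
    using prime_nthp m by (simp add: nthp_less_nthp_iff)
  then have x: "0 < x t" "x t < 1" for t
    using r prime_ge_2_nat powr_minus_in_unit_interval[of r "nthp (m + 1 + t)"] by (simp_all add: x_def)
  define f where "f p = (if prime p \<and> p \<in> {nthp m<..} then log_sigma_loc r p \<infinity> else 0)" for p
  have "f sums L"
    unfolding f_def L_def log_sigma_on_def by (rule summable_sums[OF summable_log_sigma_on[OF r]])
  moreover have "f p = 0" if "\<not> (prime p \<and> nthp m < p)" for p
    using that by (auto simp: f_def)
  ultimately have "(\<lambda>t. f (nthp (m + 1 + t))) sums L"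
    using sums_nthp_reindex[of m f L] m by blast
  moreover have "f (nthp (m + 1 + t)) = ln (1 / (1 - x t))" for t
    using above[of t] by (simp add: f_def log_sigma_loc_def sigma_loc_infinity x_def)
  ultimately have sums: "(\<lambda>t. ln (1 / (1 - x t))) sums L"
    by simp
  have "(\<Prod>t. exp (ln (1 / (1 - x t)))) = exp L"
    using prodinf_exp[OF sums_summable[OF sums]] sums_unique[OF sums] by simp
  moreover have "exp (ln (1 / (1 - x t))) = 1 / (1 - x t)" for t
    using x[of t] by simp
  ultimately show ?thesis
    by (simp add: u_tail_def x_def L_def)
qed

lemma not_mighty_iff:
  assumes "r > 1" "m \<ge> 1"
  shows "\<not> mighty r m \<longleftrightarrow> ln (1 + real (nthp m) powr - r) \<le> log_sigma_on r {nthp m<..} (\<lambda>_. \<infinity>)"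
proof -
  define x where "x = real (nthp m) powr - r"
  define T where "T = log_sigma_on r {nthp m<..} (\<lambda>_. \<infinity>)"
  have "0 \<le> x" unfolding x_def by (rule powr_ge_zero)
  then have "0 < 1 + x" by linarith
  then have "1 + x \<le> exp T \<longleftrightarrow> exp (ln (1 + x)) \<le> exp T" by simp
  also have "\<dots> \<longleftrightarrow> ln (1 + x) \<le> T" by (rule exp_le_cancel_iff)
  finally show ?thesis
    unfolding mighty_def u_tail_eq_exp_log_sigma_on[OF assms] by (simp add: not_less x_def T_def)
qed

lemma powr_le_log_sigma_on_greaterThan_if_many_primes:
  assumes r: "r > 1" and many: "16 powr r \<le> real (card {q. prime q \<and> p < q \<and> q \<le> 16 * p})"
  shows "real p powr - r \<le> log_sigma_on r {p<..} (\<lambda>_. \<infinity>)"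
proof -
  define Q where "Q = {q. prime q \<and> p < q \<and> q \<le> 16 * p}"
  have "finite Q" unfolding Q_def by (rule finite_subset[of _ "{..16 * p}"]) auto
  have "real (16 * p) powr - r \<le> log_sigma_loc r q \<infinity>" if "q \<in> Q" for q
  proof -
    have q: "prime q" "q \<le> 16 * p" "q \<ge> 2" using that prime_ge_2_nat by (auto simp: Q_def)
    then have "real (16 * p) powr - r \<le> real q powr - r"
      using r by (intro powr_mono2') auto
    also have "\<dots> \<le> log_sigma_loc r q \<infinity>"
      using q r by (intro powr_le_log_sigma_loc_infinity) auto
    finally show ?thesis .
  qed
  then have "real (card Q) * real (16 * p) powr - r \<le> (\<Sum>q\<in>Q. log_sigma_loc r q \<infinity>)"
    using sum_mono[of Q "\<lambda>_. real (16 * p) powr - r"] by simp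
  also have "\<dots> \<le> log_sigma_on r {p<..} (\<lambda>_. \<infinity>)"
    by (rule sum_le_log_sigma_on[OF r \<open>finite Q\<close>]) (simp add: Q_def)
  finally have le: "real (card Q) * real (16 * p) powr - r \<le> log_sigma_on r {p<..} (\<lambda>_. \<infinity>)" .
  have "16 powr r * real (16 * p) powr - r = 16 powr r * (16 powr - r * real p powr - r)"
    by (simp add: powr_mult)
  also have "\<dots> = (16 powr r * 16 powr - r) * real p powr - r"
    by (simp only: mult.assoc)
  also have "(16::real) powr r * 16 powr - r = 1"
    by (simp flip: powr_add)
  finally have "real p powr - r = 16 powr r * real (16 * p) powr - r" by simp
  also have "\<dots> \<le> real (card Q) * real (16 * p) powr - r"
    using many unfolding Q_def by (rule mult_right_mono) simp
  finally show ?thesis using le by linarith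
qed

lemma powr_le_log_sigma_on_greaterThan_for_large:
  assumes "r > 1"
  shows "\<exists>x0. \<forall>p\<ge>x0. real p powr - r \<le> log_sigma_on r {p<..} (\<lambda>_. \<infinity>)"
proof -
  define N where "N = nat \<lceil>16 powr r\<rceil>"
  obtain x0 :: nat where x0: "\<And>x. x \<ge> x0 \<Longrightarrow> N \<le> card {q::nat. prime q \<and> x < q \<and> q \<le> 16 * x}"
    using many_primes_between_x_and_16x[of N] by blast
  have "16 powr r \<le> real N" unfolding N_def by linarith
  have "real p powr - r \<le> log_sigma_on r {p<..} (\<lambda>_. \<infinity>)" if "p \<ge> x0" for p
  proof (rule powr_le_log_sigma_on_greaterThan_if_many_primes[OF assms])
    show "16 powr r \<le> real (card {q. prime q \<and> p < q \<and> q \<le> 16 * p})"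
      using \<open>16 powr r \<le> real N\<close> x0[OF that] by (simp add: order_trans)
  qed
  then show ?thesis by blast
qed

lemma mighty_bounded:
  assumes "r > 1"
  shows "\<exists>M. \<forall>m\<ge>M. \<not> mighty r m"
proof -
  obtain x0 where x0: "\<And>p. p \<ge> x0 \<Longrightarrow> real p powr - r \<le> log_sigma_on r {p<..} (\<lambda>_. \<infinity>)"
    using powr_le_log_sigma_on_greaterThan_for_large[OF assms] by blast
  have "\<not> mighty r m" if "m \<ge> x0 + 1" for m
  proof -
    have "x0 \<le> nthp m" using nthp_ge[of m] that by linarith
    then have "ln (1 + real (nthp m) powr - r) \<le> log_sigma_on r {nthp m<..} (\<lambda>_. \<infinity>)"
      using order.trans[OF ln_add_one_self_le_self x0] by simp
    then show ?thesis using not_mighty_iff[OF assms] that by simp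
  qed
  then show ?thesis by blast
qed

lemma not_mighty_above_L_idx:
  assumes "r > 1" "L_idx r < m"
  shows "\<not> mighty r m"
proof (cases "\<exists>m\<ge>1. mighty r m")
  case True
  obtain M where M: "\<forall>m\<ge>M. \<not> mighty r m"
    using mighty_bounded[OF assms(1)] by blast
  have bound: "\<forall>y. y \<ge> 1 \<and> mighty r y \<longrightarrow> y \<le> M"
    using M by (meson nat_le_linear)
  have "k \<le> L_idx r" if "k \<ge> 1" "mighty r k" for k
  proof -
    have "k \<le> (GREATEST m. m \<ge> 1 \<and> mighty r m)"
      by (rule Greatest_le_nat[of _ k M]) (use that bound in auto)
    then show ?thesis using True by (simp add: L_idx_def)
  qed
  moreover have "m \<ge> 1" using assms(2) by simp
  ultimately show ?thesis using assms(2) by fastforce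
next
  case False
  then show ?thesis using assms(2) by auto
qed

lemma log_sigma_on_greaterThan_ge_above_P_r:
  assumes "r > 1" "prime q" "P_r r \<le> q"
  shows "ln (1 + real q powr - r) \<le> log_sigma_on r {q<..} (\<lambda>_. \<infinity>)"
proof -
  obtain m where m: "m \<ge> 1" "nthp m = q"
    using ex_nthp_eq[OF assms(2)] by blast
  then have "L_idx r < m"
    using assms(3) nthp_le_nthp_iff[of "L_idx r + 1" m] by (simp add: P_r_def)
  then have "\<not> mighty r m"
    by (rule not_mighty_above_L_idx[OF assms(1)])
  then show ?thesis
    using not_mighty_iff[OF assms(1) m(1)] m(2) by simp
qed

section \<open>Gaps of sigma_{-r}\<close>

lemma less_ln_div_ln_iff:
  assumes "p \<ge> 2" "P > 0"
  shows "real k < ln (real P) / ln (real p) \<longleftrightarrow> p ^ k < P"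
proof -
  have "ln (real p) > 0" using assms by simp
  then have "real k < ln (real P) / ln (real p) \<longleftrightarrow> real k * ln (real p) < ln (real P)"
    by (simp add: less_divide_eq)
  also have "real k * ln (real p) = ln (real (p ^ k))"
    using assms by (simp add: ln_realpow)
  also have "ln (real (p ^ k)) < ln (real P) \<longleftrightarrow> p ^ k < P"
    using assms by simp
  finally show ?thesis .
qed

locale sigma_gap =
  fixes r :: real and a b :: steinitz
  assumes r_gt_1: "r > 1"
    and gap: "is_gap r {sigma_S r a<..<sigma_S r b}"
begin

abbreviation P :: nat where "P \<equiv> P_r r"
abbreviation log_sigma :: "steinitz \<Rightarrow> real" where "log_sigma c \<equiv> log_sigma_on r UNIV c"
abbreviation head :: "steinitz \<Rightarrow> real" where "head c \<equiv> log_sigma_on r {..<P} c"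
abbreviation tail :: "steinitz \<Rightarrow> real" where "tail c \<equiv> log_sigma_on r {P..} c"
abbreviation tail_max :: real where "tail_max \<equiv> tail (\<lambda>_. \<infinity>)"

lemma r_pos: "r > 0"
  using r_gt_1 by simp

lemma P_ge_2: "P \<ge> 2"
  using prime_nthp prime_ge_2_nat by (simp add: P_r_def)

lemma log_sigma_eq_head_plus_tail: "log_sigma c = head c + tail c"
proof -
  have "log_sigma_on r ({..<P} \<union> {P..}) c = head c + tail c"
    by (rule log_sigma_on_Un[OF r_gt_1]) auto
  moreover have "{..<P} \<union> {P..} = (UNIV :: nat set)" by auto
  ultimately show ?thesis by simp
qed

lemma log_sigma_a_less_b: "log_sigma a < log_sigma b"
proof -
  have "{sigma_S r a<..<sigma_S r b} \<noteq> {}"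
    using gap in_components_nonempty unfolding is_gap_def by blast
  then show ?thesis
    using sigma_S_eq_exp_log_sigma_on[OF r_gt_1] by simp
qed

lemma log_sigma_loc_P_le_tail_max: "log_sigma_loc r P \<infinity> \<le> tail_max"
  using sum_le_log_sigma_on[OF r_gt_1, of "{P}" "{P..}" "\<lambda>_. \<infinity>"] prime_nthp by (simp add: P_r_def)

lemma gap_avoids_tail_range: "head c + tail_max \<le> log_sigma a \<or> log_sigma b \<le> head c"
proof (rule ccontr)
  assume "\<not> ?thesis"
  then have lo: "log_sigma a < head c + tail_max" and hi: "head c < log_sigma b"
    by auto
  obtain v where v: "log_sigma a < v" "v < log_sigma b" "head c \<le> v" "v \<le> head c + tail_max"
  proof (cases "log_sigma a < head c")
    case True
    then show ?thesis
      using that[of "head c"] hi log_sigma_on_nonneg[OF r_gt_1, of "{P..}" "\<lambda>_. \<infinity>"] by auto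
  next
    case False
    define v where "v = min ((log_sigma a + log_sigma b) / 2) (head c + tail_max)"
    have "log_sigma a < v" "v < log_sigma b" "head c \<le> v" "v \<le> head c + tail_max"
      using False lo log_sigma_a_less_b log_sigma_on_nonneg[OF r_gt_1, of "{P..}" "\<lambda>_. \<infinity>"]
      unfolding v_def by (auto simp: min_def)
    then show ?thesis by (rule that)
  qed
  have "\<exists>d. tail d = v - head c"
    by (rule log_sigma_on_atLeast_onto[OF r_gt_1 log_sigma_on_greaterThan_ge_above_P_r[OF r_gt_1]])
       (use v in auto)
  then obtain d where d: "tail d = v - head c" ..
  define e where "e n = (if n < P then c n else d n)" for n
  have "head e = head c" "tail e = tail d"
    by (rule log_sigma_on_cong; simp add: e_def)+
  then have "log_sigma e = v"
    using d log_sigma_eq_head_plus_tail[of e] by simp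
  then have "sigma_S r e \<in> {sigma_S r a<..<sigma_S r b}"
    using v(1,2) sigma_S_eq_exp_log_sigma_on[OF r_gt_1] by simp
  moreover have "{sigma_S r a<..<sigma_S r b} \<subseteq> - range (sigma_S r)"
    using gap in_components_subset unfolding is_gap_def by blast
  ultimately show False by auto
qed

lemma tail_a_eq_tail_max: "tail a = tail_max"
proof -
  have "head a \<le> log_sigma a"
    using log_sigma_eq_head_plus_tail[of a] log_sigma_on_nonneg[OF r_gt_1, of "{P..}" a] by linarith
  then have "head a + tail_max \<le> log_sigma a"
    using gap_avoids_tail_range[of a] log_sigma_a_less_b by linarith
  then show ?thesis
    using log_sigma_eq_head_plus_tail[of a] log_sigma_on_le_infinity[OF r_gt_1, of "{P..}" a] by linarith
qed

lemma tail_b_eq_0: "tail b = 0"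
proof -
  have "log_sigma b \<le> head b + tail_max"
    using log_sigma_eq_head_plus_tail[of b] log_sigma_on_le_infinity[OF r_gt_1, of "{P..}" b] by linarith
  then have "log_sigma b \<le> head b"
    using gap_avoids_tail_range[of b] log_sigma_a_less_b by linarith
  then show ?thesis
    using log_sigma_eq_head_plus_tail[of b] log_sigma_on_nonneg[OF r_gt_1, of "{P..}" b] by linarith
qed

lemma a_infinite_above_P:
  assumes "prime q" "P \<le> q"
  shows "a q = \<infinity>"
proof (rule ccontr)
  assume "a q \<noteq> \<infinity>"
  then have "tail a < tail_max"
    using log_sigma_on_less_infinity[OF r_gt_1 assms(1)] assms(2) by simp
  then show False using tail_a_eq_tail_max by simp
qed

lemma b_zero_above_P:
  assumes "prime q" "P \<le> q"
  shows "b q = 0"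
proof (rule ccontr)
  assume "b q \<noteq> 0"
  then have "0 < tail b"
    using log_sigma_on_pos[OF r_gt_1 assms(1)] assms(2) by simp
  then show False using tail_b_eq_0 by simp
qed

lemma log_sigma_loc_P_less_raise_a:
  assumes "prime p" "p < P" "log_sigma_loc r p (a p) < log_sigma_loc r p \<alpha>"
  shows "log_sigma_loc r P \<infinity> < log_sigma_loc r p \<alpha> - log_sigma_loc r p (a p)"
proof -
  have "head (a(p := \<alpha>)) = head a - log_sigma_loc r p (a p) + log_sigma_loc r p \<alpha>"
    using log_sigma_on_update[OF r_gt_1 assms(1)] assms(2) by simp
  then show ?thesis
    using gap_avoids_tail_range[of "a(p := \<alpha>)"] assms(3) log_sigma_a_less_b
      log_sigma_eq_head_plus_tail[of a] tail_a_eq_tail_max log_sigma_loc_P_le_tail_max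
    by (elim disjE) linarith+
qed

lemma log_sigma_loc_P_less_lower_b:
  assumes "prime p" "p < P" "log_sigma_loc r p \<alpha> < log_sigma_loc r p (b p)"
  shows "log_sigma_loc r P \<infinity> < log_sigma_loc r p (b p) - log_sigma_loc r p \<alpha>"
proof -
  have "head (b(p := \<alpha>)) = head b - log_sigma_loc r p (b p) + log_sigma_loc r p \<alpha>"
    using log_sigma_on_update[OF r_gt_1 assms(1)] assms(2) by simp
  then show ?thesis
    using gap_avoids_tail_range[of "b(p := \<alpha>)"] assms(3) log_sigma_a_less_b
      log_sigma_eq_head_plus_tail[of b] tail_b_eq_0 log_sigma_loc_P_le_tail_max
    by (elim disjE) linarith+
qed

lemma a_exponent_bound:
  assumes "prime p" "p < P" "a p = enat k"
  shows "p ^ Suc k < P"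
proof (rule ccontr)
  assume "\<not> ?thesis"
  then have "P \<le> p ^ Suc k" by simp
  have p2: "p \<ge> 2" using assms(1) prime_ge_2_nat by blast
  have "log_sigma_loc r p (a p) < log_sigma_loc r p (enat (Suc k))"
    using assms(3) strict_monoD[OF strict_mono_log_sigma_loc[OF r_pos p2]] by simp
  then have "log_sigma_loc r P \<infinity> < log_sigma_loc r p (enat (Suc k)) - log_sigma_loc r p (enat k)"
    using log_sigma_loc_P_less_raise_a[OF assms(1,2)] assms(3) by simp
  then show False
    using log_sigma_loc_minus_le_infinity[OF r_pos p2 P_ge_2 \<open>P \<le> p ^ Suc k\<close>, of "enat (Suc k)"]
    by linarith
qed

lemma b_exponent_bound:
  assumes "prime p" "p < P"
  shows "\<exists>k. b p = enat k \<and> p ^ k < P"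
proof -
  have p2: "p \<ge> 2" using assms(1) prime_ge_2_nat by blast
  have no_step: "\<not> (enat j < b p \<and> P \<le> p ^ Suc j)" for j
  proof
    assume j: "enat j < b p \<and> P \<le> p ^ Suc j"
    then have "log_sigma_loc r p (enat j) < log_sigma_loc r p (b p)"
      using strict_monoD[OF strict_mono_log_sigma_loc[OF r_pos p2]] by blast
    then have "log_sigma_loc r P \<infinity> < log_sigma_loc r p (b p) - log_sigma_loc r p (enat j)"
      by (rule log_sigma_loc_P_less_lower_b[OF assms])
    then show False
      using log_sigma_loc_minus_le_infinity[OF r_pos p2 P_ge_2, of j "b p"] j by linarith
  qed
  have "(2::nat) ^ Suc P \<le> p ^ Suc P"
    using p2 by (rule power_mono) simp
  then have "P \<le> p ^ Suc P"
    using less_exp[of "Suc P"] by linarith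
  have "b p \<noteq> \<infinity>"
  proof
    assume "b p = \<infinity>"
    then show False using no_step[of P] \<open>P \<le> p ^ Suc P\<close> by simp
  qed
  then obtain k where k: "b p = enat k" by (cases "b p") auto
  have "p ^ k < P"
  proof (rule ccontr)
    assume "\<not> ?thesis"
    then have "P \<le> p ^ k" by simp
    moreover from this have "k \<noteq> 0" using P_ge_2 by (cases k) auto
    ultimately show False
      using no_step[of "k - 1"] k by (cases k) auto
  qed
  with k show ?thesis by blast
qed

end

theorem mainTheorem15:
  fixes r :: real and a b :: steinitz
  assumes "r > 1"
    and "is_gap r {sigma_S r a <..< sigma_S r b}"
  shows "(\<forall>p. prime p \<and> p \<ge> P_r r \<longrightarrow> a p = \<infinity> \<and> b p = 0)
       \<and> (\<forall>p k. prime p \<and> p < P_r r \<and> a p = enat k \<longrightarrow>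
              real k < ln (real (P_r r)) / ln (real p) - 1)
       \<and> (\<forall>p. prime p \<and> p < P_r r \<longrightarrow>
              (\<exists>k. b p = enat k \<and> real k < ln (real (P_r r)) / ln (real p)))"
proof -
  interpret sigma_gap r a b
    using assms by unfold_locales
  have exponent_iff: "real k < ln (real (P_r r)) / ln (real p) \<longleftrightarrow> p ^ k < P_r r" if "prime p" for p k
    using less_ln_div_ln_iff[of p "P_r r" k] that prime_ge_2_nat P_ge_2 by simp
  have "real k < ln (real (P_r r)) / ln (real p) - 1" if "prime p" "p < P_r r" "a p = enat k" for p k
  proof -
    have "real (Suc k) < ln (real (P_r r)) / ln (real p)"
      using a_exponent_bound[OF that] exponent_iff[OF that(1)] by blast
    then show ?thesis by simp
  qed
  moreover have "\<exists>k. b p = enat k \<and> real k < ln (real (P_r r)) / ln (real p)" if "prime p" "p < P_r r" for p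
    using b_exponent_bound[OF that] exponent_iff[OF that(1)] by blast
  ultimately show ?thesis
    using a_infinite_above_P b_zero_above_P by blast
qed

end
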